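(* Let $\mathbb X$ be a compact Ahlfors $d$-regular length space. Then there is a constant $C_{\mathrm{TSP}}\in(0,\infty)$ depending only on $\mathbb X$ (namely one with $\mathrm{TSP}_{\mathbb X}(N)\le C_{\mathrm{TSP}}N^{1-1/d}$ for all $N$) such that for all $N\in\mathbb N$, $$\mathcal P^{\mathrm{atom}}_N(\mathbb X)\subset\mathcal P^{\mathrm{curve}}_{C_{\mathrm{TSP}}N^{1-1/d}}(\mathbb X).$$
   Context: $\mathbb X$ is a compact metric space with finite nonnegative Borel measure $\sigma_{\mathbb X}$ of full support; Ahlfors $d$-regular: $\sigma_{\mathbb X}(B_r(x))\sim r^d$ for $x\in\mathbb X$, $0<r\le\mathrm{diam}(\mathbb X)$, constants uniform; length space: $\mathrm{dist}_{\mathbb X}(x,y)$ equals the infimum of lengths of continuous curves joining $x,y$. $\mathrm{TSP}_{\mathbb X}(N)$: worst case over $N$ points in $\mathbb X$ of the minimal cost of a closed tour through them, edge costs being distances. $\mathcal P^{\mathrm{atom}}_N(\mathbb X)=\{\sum_{k=1}^Nw_k\delta_{x_k}:x_k\in\mathbb X,w_k\ge0,\sum w_k=1\}$. $\mathcal P^{\mathrm{curve}}_L(\mathbb X)$: probability measures $\nu$ with $\mathrm{supp}(\nu)\subset\gamma([a,b])$ for some continuous $\gamma\colon[a,b]\to\mathbb X$, $\gamma(a)=\gamma(b)$, with length $\ell(\gamma)=\sup\sum_k\mathrm{dist}(\gamma(t_k),\gamma(t_{k-1}))\le L$. *)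

theory Defs
  imports "HOL-Analysis.Analysis" "HOL-Probability.Probability"
begin

definition curve_length :: "(real \<Rightarrow> 'a::metric_space) \<Rightarrow> real \<Rightarrow> real \<Rightarrow> ereal" where
  "curve_length \<gamma> a b =
     (SUP tn \<in> {(t, n). t 0 = a \<and> t n = b \<and> (\<forall>k<n. t k \<le> t (Suc k))}.
        ereal (\<Sum>k\<in>{1..snd tn}. dist (\<gamma> (fst tn k)) (\<gamma> (fst tn (k - 1)))))"

definition length_space :: "'a::metric_space itself \<Rightarrow> bool" where
  "length_space _ \<longleftrightarrow>
     (\<forall>x y::'a. ereal (dist x y) =
        (INF cab \<in> {(\<gamma>, a, b). a \<le> b \<and> continuous_on {a..b} \<gamma> \<and> \<gamma> a = x \<and> \<gamma> b = y}.
           curve_length (fst cab) (fst (snd cab)) (snd (snd cab))))"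

definition measure_support :: "'a::topological_space measure \<Rightarrow> 'a set" where
  "measure_support \<nu> = {x. \<forall>U. open U \<and> x \<in> U \<longrightarrow> emeasure \<nu> U > 0}"

definition ahlfors_regular :: "'a::metric_space measure \<Rightarrow> real \<Rightarrow> bool" where
  "ahlfors_regular \<sigma> d \<longleftrightarrow>
     (\<exists>c1 c2. 0 < c1 \<and> 0 < c2 \<and>
        (\<forall>x r. 0 < r \<and> r \<le> diameter (UNIV::'a set) \<longrightarrow>
           c1 * r powr d \<le> measure \<sigma> (ball x r) \<and> measure \<sigma> (ball x r) \<le> c2 * r powr d))"

definition tour_cost :: "'a::metric_space list \<Rightarrow> (nat \<Rightarrow> nat) \<Rightarrow> real" where
  "tour_cost xs p = (\<Sum>i<length xs. dist (xs ! p i) (xs ! p (Suc i mod length xs)))"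

definition min_tour :: "'a::metric_space list \<Rightarrow> real" where
  "min_tour xs = Min {tour_cost xs p | p. p permutes {..<length xs}}"

definition TSP :: "'a::metric_space itself \<Rightarrow> nat \<Rightarrow> real" where
  "TSP _ N = Sup {min_tour xs | xs::'a list. length xs = N}"

definition P_atom :: "nat \<Rightarrow> 'a::metric_space measure set" where
  "P_atom N = {\<nu>. sets \<nu> = sets borel \<and>
     (\<exists>x w. (\<forall>k<N. 0 \<le> w k) \<and> (\<Sum>k<N. w k) = 1 \<and>
        (\<forall>A\<in>sets borel. emeasure \<nu> A = (\<Sum>k<N. ennreal (w k) * indicator A (x k))))}"

definition P_curve :: "real \<Rightarrow> 'a::metric_space measure set" where
  "P_curve L = {\<nu>. prob_space \<nu> \<and> sets \<nu> = sets borel \<and>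
     (\<exists>\<gamma> a b. a \<le> b \<and> continuous_on {a..b} \<gamma> \<and> \<gamma> a = \<gamma> b \<and>
        measure_support \<nu> \<subseteq> \<gamma> ` {a..b} \<and> curve_length \<gamma> a b \<le> ereal L)}"

end

theory Submission
  imports Defs
begin

text \<open>Put \<open>r = N powr (-1/d)\<close>. A maximal \<open>r\<close>-separated set \<open>E\<close> is an \<open>r\<close>-net, and since the
  balls of radius \<open>r/2\<close> around its points are disjoint, the lower Ahlfors bound gives
  \<open>card E = O(N)\<close>. A length space is connected, so \<open>E\<close> together with \<open>N\<close> given points is
  \<open>2r\<close>-chain connected, and a closed walk around a spanning tree of the \<open>2r\<close>-close pairs visits
  all of them at cost \<open>O(r N) = O(N powr (1 - 1/d))\<close>. In a length space each step of the walk is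
  realised by a curve of almost the same length, which gives a closed curve through the points.
  Such a curve dominates the shortest tour through them (visit the points in the order of their
  parameters) and supports every probability measure with atoms at them.\<close>

definition inscribed_length :: "(real \<Rightarrow> 'a::metric_space) \<Rightarrow> (nat \<Rightarrow> real) \<Rightarrow> nat \<Rightarrow> real" where
  "inscribed_length g t n = (\<Sum>k<n. dist (g (t (Suc k))) (g (t k)))"

definition is_partition :: "real \<Rightarrow> real \<Rightarrow> (nat \<Rightarrow> real) \<Rightarrow> nat \<Rightarrow> bool" where
  "is_partition a b t n \<longleftrightarrow> t 0 = a \<and> t n = b \<and> (\<forall>k<n. t k \<le> t (Suc k))"

lemma curve_length_eq_SUP_inscribed_length:
  "curve_length g a b = (SUP tn \<in> {(t, n). is_partition a b t n}. ereal (inscribed_length g (fst tn) (snd tn)))"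
proof -
  have "(\<Sum>k\<in>{1..n}. dist (g (t k)) (g (t (k - 1)))) = inscribed_length g t n" for t n
    unfolding inscribed_length_def by (induction n) (simp_all add: sum.atLeast1_atMost_eq)
  then show ?thesis
    unfolding curve_length_def is_partition_def by simp
qed

lemma inscribed_length_le_curve_length:
  "is_partition a b t n \<Longrightarrow> ereal (inscribed_length g t n) \<le> curve_length g a b"
  unfolding curve_length_eq_SUP_inscribed_length by (rule SUP_upper2[where i="(t, n)"]) auto

lemma curve_length_le:
  "(\<And>t n. is_partition a b t n \<Longrightarrow> inscribed_length g t n \<le> L) \<Longrightarrow> curve_length g a b \<le> ereal L"
  unfolding curve_length_eq_SUP_inscribed_length by (rule SUP_least) auto

lemma is_partition_mono:
  assumes "is_partition a b t n" "k \<le> l" "l \<le> n"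
  shows "t k \<le> t l"
  using assms(2,3)
proof (induction l)
  case (Suc l)
  then show ?case
    using assms(1) unfolding is_partition_def by (auto simp: le_Suc_eq intro: order_trans)
qed simp

lemma is_partition_range:
  "is_partition a b t n \<Longrightarrow> k \<le> n \<Longrightarrow> t k \<in> {a..b}"
  using is_partition_mono[of a b t n 0 k] is_partition_mono[of a b t n k n]
  by (simp add: is_partition_def)

lemma curve_length_nonneg:
  assumes "a \<le> b"
  shows "0 \<le> curve_length g a b"
proof -
  have "is_partition a b (\<lambda>k. if k = 0 then a else b) 1"
    using assms by (simp add: is_partition_def)
  from inscribed_length_le_curve_length[OF this, of g] show ?thesis
    by (simp add: inscribed_length_def order_trans[rotated])
qed

lemma curve_length_const: "curve_length (\<lambda>_. c) a b \<le> 0"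
  using curve_length_le[of a b "\<lambda>_. c" 0] by (simp add: inscribed_length_def zero_ereal_def)

lemma curve_length_reparametrize_le:
  assumes "\<And>s. s \<in> {a'..b'} \<Longrightarrow> h s = g (\<phi> s)"
    and "\<And>s u. s \<in> {a'..b'} \<Longrightarrow> u \<in> {a'..b'} \<Longrightarrow> s \<le> u \<Longrightarrow> \<phi> s \<le> \<phi> u"
    and "\<phi> a' = a" "\<phi> b' = b"
  shows "curve_length h a' b' \<le> curve_length g a b"
  unfolding curve_length_eq_SUP_inscribed_length[of h]
proof (rule SUP_least, clarsimp)
  fix t n assume t: "is_partition a' b' t n"
  have range: "\<And>k. k \<le> n \<Longrightarrow> t k \<in> {a'..b'}"
    using is_partition_range[OF t] by blast
  have "is_partition a b (\<phi> \<circ> t) n"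
    using t assms(2-4) range unfolding is_partition_def by auto
  moreover have "inscribed_length h t n = inscribed_length g (\<phi> \<circ> t) n"
    unfolding inscribed_length_def using assms(1) range by (intro sum.cong) auto
  ultimately show "ereal (inscribed_length h t n) \<le> curve_length g a b"
    by (metis inscribed_length_le_curve_length)
qed

text \<open>Clipping a partition of \<open>[a, b]\<close> at \<open>c\<close> by \<open>min\<close> and \<open>max\<close> yields partitions of
  \<open>[a, c]\<close> and \<open>[c, b]\<close>; the only step crossing \<open>c\<close> is handled by the triangle inequality.\<close>

lemma dist_le_clipped_dist:
  fixes g :: "real \<Rightarrow> 'a::metric_space"
  assumes "s \<le> u"
  shows "dist (g u) (g s) \<le> dist (g (min u c)) (g (min s c)) + dist (g (max u c)) (g (max s c))"
proof (cases "u \<le> c")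
  case False
  show ?thesis
  proof (cases "c \<le> s")
    case False
    then show ?thesis
      using \<open>\<not> u \<le> c\<close> dist_triangle[of "g u" "g s" "g c"] by (simp add: dist_commute)
  qed (use assms in auto)
qed (use assms in auto)

lemma curve_length_split_le:
  assumes "a \<le> c" "c \<le> b"
  shows "curve_length g a b \<le> curve_length g a c + curve_length g c b"
  unfolding curve_length_eq_SUP_inscribed_length[of g a b]
proof (rule SUP_least, clarsimp)
  fix t n assume t: "is_partition a b t n"
  have "is_partition a c (\<lambda>k. min (t k) c) n" "is_partition c b (\<lambda>k. max (t k) c) n"
    using t assms unfolding is_partition_def by (auto intro: min.mono max.mono)
  then have "ereal (inscribed_length g (\<lambda>k. min (t k) c) n) + ereal (inscribed_length g (\<lambda>k. max (t k) c) n)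
      \<le> curve_length g a c + curve_length g c b"
    by (intro add_mono inscribed_length_le_curve_length)
  moreover have "inscribed_length g t n
      \<le> inscribed_length g (\<lambda>k. min (t k) c) n + inscribed_length g (\<lambda>k. max (t k) c) n"
    unfolding inscribed_length_def sum.distrib[symmetric]
    using t by (intro sum_mono dist_le_clipped_dist) (simp add: is_partition_def)
  ultimately show "ereal (inscribed_length g t n) \<le> curve_length g a c + curve_length g c b"
    by (metis ereal_less_eq(3) order_trans plus_ereal.simps(1))
qed

lemma curve_length_joinpaths_le:
  assumes "pathfinish g1 = pathstart g2"
  shows "curve_length (g1 +++ g2) 0 1 \<le> curve_length g1 0 1 + curve_length g2 0 1"
proof -
  have "curve_length (g1 +++ g2) 0 1 \<le> curve_length (g1 +++ g2) 0 (1/2) + curve_length (g1 +++ g2) (1/2) 1"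
    by (rule curve_length_split_le) auto
  also have "\<dots> \<le> curve_length g1 0 1 + curve_length g2 0 1"
  proof (rule add_mono)
    show "curve_length (g1 +++ g2) 0 (1/2) \<le> curve_length g1 0 1"
      by (rule curve_length_reparametrize_le[where \<phi>="\<lambda>s. 2 * s"]) (auto simp: joinpaths_def)
    have "(g1 +++ g2) s = g2 (2 * s - 1)" if "s \<in> {1/2..1}" for s
    proof (cases "s = 1/2")
      case True
      then show ?thesis
        using assms unfolding True by (simp add: joinpaths_def pathfinish_def pathstart_def)
    qed (use that in \<open>simp add: joinpaths_def\<close>)
    then show "curve_length (g1 +++ g2) (1/2) 1 \<le> curve_length g2 0 1"
      by (rule curve_length_reparametrize_le[where \<phi>="\<lambda>s. 2 * s - 1"]) auto
  qed
  finally show ?thesis .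
qed

lemma length_space_short_path:
  fixes x y :: "'a::metric_space"
  assumes "length_space TYPE('a)" and "0 < e"
  obtains g where "path g" "pathstart g = x" "pathfinish g = y"
    "curve_length g 0 1 < ereal (dist x y + e)"
proof -
  let ?S = "{(\<gamma>, a, b). a \<le> b \<and> continuous_on {a..b} \<gamma> \<and> \<gamma> a = x \<and> \<gamma> b = y}"
  have "(INF cab \<in> ?S. curve_length (fst cab) (fst (snd cab)) (snd (snd cab))) < ereal (dist x y + e)"
    using assms unfolding length_space_def by (metis ereal_less_eq(3) less_add_same_cancel1 linorder_not_le)
  then obtain \<gamma> a b where ab: "a \<le> b" and \<gamma>: "continuous_on {a..b} \<gamma>" "\<gamma> a = x" "\<gamma> b = y"
    and short: "curve_length \<gamma> a b < ereal (dist x y + e)"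
    by (auto simp: INF_less_iff)
  define \<phi> where "\<phi> s = a + s * (b - a)" for s
  have \<phi>: "\<phi> ` {0..1} \<subseteq> {a..b}"
    using ab mult_left_le_one_le[of "b - a"] by (auto simp: \<phi>_def algebra_simps mult_left_mono)
  have "path (\<gamma> \<circ> \<phi>)"
    unfolding path_def \<phi>_def by (intro continuous_on_compose continuous_intros continuous_on_subset[OF \<gamma>(1) \<phi>[unfolded \<phi>_def]])
  moreover have "curve_length (\<gamma> \<circ> \<phi>) 0 1 \<le> curve_length \<gamma> a b"
    using ab by (intro curve_length_reparametrize_le[where \<phi>=\<phi>]) (auto simp: \<phi>_def mult_right_mono)
  ultimately show ?thesis
    using that \<gamma> short by (auto simp: pathstart_def pathfinish_def \<phi>_def)
qed

lemma length_space_imp_path_connected: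
  assumes "length_space TYPE('a::metric_space)"
  shows "path_connected (UNIV :: 'a set)"
  using length_space_short_path[OF assms zero_less_one] unfolding path_connected_def by blast

fun walk_cost :: "'a::metric_space list \<Rightarrow> real" where
  "walk_cost (x # y # zs) = dist x y + walk_cost (y # zs)"
| "walk_cost _ = 0"

lemma walk_cost_append_Cons: "walk_cost (xs @ t # ys) = walk_cost (xs @ [t]) + walk_cost (t # ys)"
  by (induction xs rule: induct_list012) auto

lemma walk_cost_detour: "walk_cost (xs @ t # s # t # ys) = walk_cost (xs @ t # ys) + 2 * dist t s"
  using walk_cost_append_Cons[of xs t "s # t # ys"] walk_cost_append_Cons[of xs t ys]
  by (simp add: dist_commute)

lemma path_along_walk:
  fixes xs :: "'a::metric_space list"
  assumes "length_space TYPE('a)" "xs \<noteq> []" "0 < e"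
  obtains g where "path g" "pathstart g = hd xs" "pathfinish g = last xs"
    "set xs \<subseteq> path_image g" "curve_length g 0 1 \<le> ereal (walk_cost xs + e)"
proof -
  have "\<exists>g. path g \<and> pathstart g = hd xs \<and> pathfinish g = last xs \<and>
      set xs \<subseteq> path_image g \<and> curve_length g 0 1 \<le> ereal (walk_cost xs + e)"
    using assms(2,3)
  proof (induction xs arbitrary: e rule: induct_list012)
    case (2 x)
    have "curve_length (\<lambda>_::real. x) 0 1 \<le> ereal (walk_cost [x] + e)"
      using curve_length_const[of x 0 1] \<open>0 < e\<close> by (simp add: order_trans)
    then show ?case
      by (intro exI[of _ "\<lambda>_. x"]) (simp add: path_def pathstart_def pathfinish_def path_image_def)
  next
    case (3 x y zs)
    have e2: "0 < e / 2" using \<open>0 < e\<close> by simp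
    obtain g where g: "path g" "pathstart g = y" "pathfinish g = last (y # zs)"
      "set (y # zs) \<subseteq> path_image g" "curve_length g 0 1 \<le> ereal (walk_cost (y # zs) + e / 2)"
      using "3.IH"(2)[OF _ e2] by auto
    obtain h where h: "path h" "pathstart h = x" "pathfinish h = y"
      "curve_length h 0 1 < ereal (dist x y + e / 2)"
      using length_space_short_path[OF assms(1) e2] by blast
    have hg: "pathfinish h = pathstart g" using h g by simp
    have "curve_length (h +++ g) 0 1 \<le> curve_length h 0 1 + curve_length g 0 1"
      by (rule curve_length_joinpaths_le[OF hg])
    also have "\<dots> \<le> ereal (dist x y + e / 2) + ereal (walk_cost (y # zs) + e / 2)"
      using h(4) g(5) by (intro add_mono) auto
    finally have "curve_length (h +++ g) 0 1 \<le> ereal (walk_cost (x # y # zs) + e)"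
      by (simp add: add_ac)
    moreover have "set (x # y # zs) \<subseteq> path_image (h +++ g)"
      using path_image_join[OF hg] pathstart_in_path_image[of h] h(2) g(4) by auto
    ultimately show ?case
      using g h hg by (intro exI[of _ "h +++ g"]) simp
  qed simp
  with that show ?thesis by blast
qed

definition chain_connected :: "'a::metric_space set \<Rightarrow> real \<Rightarrow> bool" where
  "chain_connected S \<delta> \<longleftrightarrow>
     (\<forall>T. T \<subseteq> S \<and> T \<noteq> {} \<and> T \<noteq> S \<longrightarrow> (\<exists>t\<in>T. \<exists>s\<in>S - T. dist t s < \<delta>))"

text \<open>The walk grows one point at a time: a point \<open>s\<close> closer than \<open>\<delta>\<close> to a visited point \<open>t\<close> is
  inserted as the detour \<open>t, s, t\<close>, at cost \<open>2 * dist t s\<close>.\<close>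

lemma chain_connected_closed_walk:
  fixes S :: "'a::metric_space set"
  assumes "finite S" "S \<noteq> {}" "chain_connected S \<delta>"
  obtains xs where "xs \<noteq> []" "hd xs = last xs" "set xs = S" "walk_cost xs \<le> 2 * \<delta> * real (card S - 1)"
proof -
  have "\<exists>xs. xs \<noteq> [] \<and> hd xs = last xs \<and> set xs \<subseteq> S \<and> card (set xs) = Suc n \<and> walk_cost xs \<le> 2 * \<delta> * n"
    if "n < card S" for n
    using that
  proof (induction n)
    case 0
    obtain p where "p \<in> S" using assms(2) by blast
    then show ?case by (intro exI[of _ "[p]"]) auto
  next
    case (Suc n)
    then obtain xs where xs: "xs \<noteq> []" "hd xs = last xs" "set xs \<subseteq> S" "card (set xs) = Suc n"
      "walk_cost xs \<le> 2 * \<delta> * n"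
      by auto
    have "set xs \<noteq> S" using xs(4) Suc.prems by auto
    then obtain t s where t: "t \<in> set xs" and s: "s \<in> S - set xs" and ts: "dist t s < \<delta>"
      using assms(3) xs unfolding chain_connected_def by (metis set_empty)
    obtain us vs where xs_split: "xs = us @ t # vs" using split_list[OF t] by blast
    define xs' where "xs' = us @ t # s # t # vs"
    have "hd xs' = hd xs" "last xs' = last xs"
      unfolding xs'_def xs_split by (cases us; cases vs; simp)+
    moreover have "set xs' = insert s (set xs)"
      unfolding xs'_def xs_split by auto
    moreover have "walk_cost xs' \<le> 2 * \<delta> * Suc n"
      using walk_cost_detour[of us t s vs] xs(5) ts unfolding xs'_def xs_split by (simp add: algebra_simps)
    ultimately show ?case
      using xs s assms(1) by (intro exI[of _ xs']) (auto simp: xs'_def card_insert_if)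
  qed
  from this[of "card S - 1"] obtain xs where "xs \<noteq> []" "hd xs = last xs" "set xs \<subseteq> S"
      "card (set xs) = card S" "walk_cost xs \<le> 2 * \<delta> * real (card S - 1)"
    using assms(1,2) by (auto simp: card_gt_0_iff)
  then show ?thesis
    using that card_subset_eq[OF assms(1)] by blast
qed

lemma min_tour_Nil: "min_tour [] = 0"
proof -
  have "{tour_cost [] p | p. p permutes {..<length []}} = {0}"
    using permutes_id[of "{}"] by (auto simp: tour_cost_def)
  then show ?thesis unfolding min_tour_def by simp
qed

lemma min_tour_le_tour_cost: "p permutes {..<length xs} \<Longrightarrow> min_tour xs \<le> tour_cost xs p"
proof -
  assume p: "p permutes {..<length xs}"
  have "{tour_cost xs q | q. q permutes {..<length xs}} = tour_cost xs ` {q. q permutes {..<length xs}}"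
    by auto
  then have "finite {tour_cost xs q | q. q permutes {..<length xs}}"
    using finite_permutations[of "{..<length xs}"] by simp
  then show ?thesis
    unfolding min_tour_def using p by (intro Min_le) auto
qed

lemma sorting_permutation_exists:
  fixes \<tau> :: "nat \<Rightarrow> 'b::linorder"
  obtains p where "p permutes {..<n}" "\<And>i j. i \<le> j \<Longrightarrow> j < n \<Longrightarrow> \<tau> (p i) \<le> \<tau> (p j)"
proof -
  define q where "q = sort_key \<tau> [0..<n]"
  have q: "length q = n" "set q = {..<n}" "distinct q" "sorted (map \<tau> q)"
    unfolding q_def by auto
  define p where "p i = (if i < n then q ! i else i)" for i
  have "bij_betw ((!) q) {..<n} {..<n}"
    using bij_betw_nth[OF q(3)] q(1,2) by simp
  then have "bij_betw p {..<n} {..<n}"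
    by (rule bij_betw_cong[THEN iffD1, rotated]) (simp add: p_def)
  then have "p permutes {..<n}"
    by (intro bij_imp_permutes) (auto simp: p_def)
  moreover have "\<tau> (p i) \<le> \<tau> (p j)" if "i \<le> j" "j < n" for i j
    using sorted_nth_mono[OF q(4), of i j] that q(1) by (simp add: p_def)
  ultimately show ?thesis using that by blast
qed

text \<open>Visiting the points \<open>g (s 0), \<dots>, g (s m)\<close> in this order costs at most the inscribed length
  along \<open>0 \<le> s 0 \<le> \<dots> \<le> s m \<le> 1\<close>, because the closing edge is bounded via \<open>g 1 = g 0\<close>.\<close>

lemma tour_cost_le_curve_length:
  fixes xs :: "'a::metric_space list"
  assumes len: "length xs = Suc m" and closed: "g 0 = g 1"
    and s_mono: "\<And>i j. i \<le> j \<Longrightarrow> j \<le> m \<Longrightarrow> s i \<le> s j"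
    and s_range: "\<And>i. i \<le> m \<Longrightarrow> s i \<in> {0..1}"
    and points: "\<And>i. i \<le> m \<Longrightarrow> xs ! p i = g (s i)"
  shows "ereal (tour_cost xs p) \<le> curve_length g 0 1"
proof -
  define t where "t k = (if k = 0 then 0 else if k \<le> Suc m then s (k - 1) else 1)" for k
  have "is_partition 0 1 t (Suc (Suc m))"
    unfolding is_partition_def t_def using s_mono s_range by (auto simp: le_Suc_eq)
  have "tour_cost xs p = (\<Sum>i<m. dist (g (s i)) (g (s (Suc i)))) + dist (g (s m)) (g (s 0))"
    unfolding tour_cost_def len using points by simp
  also have "\<dots> \<le> dist (g (s 0)) (g 0) + (\<Sum>i<m. dist (g (s (Suc i))) (g (s i))) + dist (g 1) (g (s m))"
    using dist_triangle[of "g (s m)" "g (s 0)" "g 0"] closed by (simp add: dist_commute)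
  also have "\<dots> = (\<Sum>k<Suc m. dist (g (t (Suc k))) (g (t k))) + dist (g (t (Suc (Suc m)))) (g (t (Suc m)))"
    unfolding sum.lessThan_Suc_shift[of _ m] by (simp add: t_def)
  also have "\<dots> = inscribed_length g t (Suc (Suc m))"
    unfolding inscribed_length_def by simp
  finally show ?thesis
    using inscribed_length_le_curve_length[OF \<open>is_partition 0 1 t (Suc (Suc m))\<close>, of g]
    by (meson ereal_less_eq(3) order_trans)
qed

definition on_closed_curve :: "'a::metric_space set \<Rightarrow> real \<Rightarrow> bool" where
  "on_closed_curve X L \<longleftrightarrow>
     (\<exists>g. path g \<and> pathstart g = pathfinish g \<and> X \<subseteq> path_image g \<and> curve_length g 0 1 \<le> ereal L)"

lemma min_tour_le_curve_length:
  fixes xs :: "'a::metric_space list"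
  assumes closed: "g 0 = g 1" and points: "set xs \<subseteq> g ` {0..1}"
  shows "ereal (min_tour xs) \<le> curve_length g 0 1"
proof (cases "xs = []")
  case True
  then show ?thesis
    using curve_length_nonneg[of 0 1 g] by (simp add: min_tour_Nil zero_ereal_def)
next
  case False
  then obtain m where len: "length xs = Suc m"
    by (cases xs) auto
  have "\<exists>u\<in>{0..1}. g u = xs ! i" if "i < Suc m" for i
    using points that len by (metis imageE nth_mem subsetD)
  then obtain \<tau> where \<tau>: "\<And>i. i < Suc m \<Longrightarrow> \<tau> i \<in> {0..1} \<and> g (\<tau> i) = xs ! i"
    by metis
  obtain p where p: "p permutes {..<Suc m}" and sorted: "\<And>i j. i \<le> j \<Longrightarrow> j < Suc m \<Longrightarrow> \<tau> (p i) \<le> \<tau> (p j)"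
    using sorting_permutation_exists by blast
  have p_range: "p i < Suc m" if "i \<le> m" for i
    using permutes_in_image[OF p] that by simp
  have "min_tour xs \<le> tour_cost xs p"
    using p len by (intro min_tour_le_tour_cost) simp
  also have "ereal (tour_cost xs p) \<le> curve_length g 0 1"
    using len closed sorted \<tau> p_range by (intro tour_cost_le_curve_length[where s="\<tau> \<circ> p"]) auto
  finally show ?thesis by simp
qed

lemma TSP_le_if_on_closed_curve:
  assumes "\<And>xs :: 'a::metric_space list. length xs = N \<Longrightarrow> on_closed_curve (set xs) L"
  shows "TSP TYPE('a) N \<le> L"
  unfolding TSP_def
proof (rule cSup_least)
  show "{min_tour xs | xs::'a list. length xs = N} \<noteq> {}"
    by (auto intro!: exI[of _ "replicate N undefined"])
next
  fix v assume "v \<in> {min_tour xs | xs::'a list. length xs = N}"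
  then obtain xs :: "'a list" where "length xs = N" "v = min_tour xs" by blast
  moreover obtain g where "pathstart g = pathfinish g" "set xs \<subseteq> path_image g" "curve_length g 0 1 \<le> ereal L"
    using assms[OF \<open>length xs = N\<close>] unfolding on_closed_curve_def by blast
  ultimately show "v \<le> L"
    using min_tour_le_curve_length[of g xs] unfolding pathstart_def pathfinish_def path_image_def
    by (metis ereal_less_eq(3) order_trans)
qed

lemma P_atom_subset_P_curve:
  assumes "\<And>x :: nat \<Rightarrow> 'a::metric_space. on_closed_curve (x ` {..<N}) L"
  shows "(P_atom N :: 'a measure set) \<subseteq> P_curve L"
proof
  fix \<nu> :: "'a measure" assume "\<nu> \<in> P_atom N"
  then obtain x w where sets: "sets \<nu> = sets borel" and w_nonneg: "\<forall>k<N. 0 \<le> w k" and w_sum: "(\<Sum>k<N. w k) = 1"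
    and \<nu>: "\<forall>A\<in>sets borel. emeasure \<nu> A = (\<Sum>k<N. ennreal (w k) * indicator A (x k))"
    unfolding P_atom_def by blast
  obtain g where g: "path g" "pathstart g = pathfinish g" "x ` {..<N} \<subseteq> path_image g"
      "curve_length g 0 1 \<le> ereal L"
    using assms unfolding on_closed_curve_def by blast
  have "emeasure \<nu> (space \<nu>) = (\<Sum>k<N. ennreal (w k))"
    using \<nu> sets_eq_imp_space_eq[OF sets] by (simp add: lessThan_def)
  also have "\<dots> = 1"
    using w_nonneg w_sum by (subst sum_ennreal) auto
  finally have "prob_space \<nu>"
    by (rule prob_spaceI)
  moreover have "measure_support \<nu> \<subseteq> g ` {0..1}"
  proof
    fix y assume y: "y \<in> measure_support \<nu>"
    show "y \<in> g ` {0..1}"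
    proof (rule ccontr)
      assume "y \<notin> g ` {0..1}"
      then have "y \<in> - x ` {..<N}"
        using g(3) unfolding path_image_def by auto
      moreover have "open (- x ` {..<N})"
        by (intro open_Compl finite_imp_closed) simp
      moreover have "emeasure \<nu> (- x ` {..<N}) = 0"
        using \<nu> \<open>open (- x ` {..<N})\<close> by auto
      ultimately show False
        using y unfolding measure_support_def by fastforce
    qed
  qed
  ultimately show "\<nu> \<in> P_curve L"
    using g sets unfolding P_curve_def path_def pathstart_def pathfinish_def
    by (intro CollectI conjI exI[of _ g] exI[of _ 0] exI[of _ 1]) auto
qed

definition separated :: "real \<Rightarrow> 'a::metric_space set \<Rightarrow> bool" where
  "separated r F \<longleftrightarrow> (\<forall>x\<in>F. \<forall>y\<in>F. x \<noteq> y \<longrightarrow> r \<le> dist x y)"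

text \<open>The balls of radius \<open>r/2\<close> around an \<open>r\<close>-separated set are disjoint, and each has measure at
  least \<open>c1 * (r/2) powr d\<close> unless \<open>r/2\<close> exceeds the diameter, in which case the set has at most one point.\<close>

lemma card_separated_le:
  fixes \<sigma> :: "'a::metric_space measure" and F :: "'a set"
  assumes sets: "sets \<sigma> = sets borel" and "finite_measure \<sigma>" and "bounded (UNIV :: 'a set)"
    and c1: "0 < c1"
    and lower: "\<forall>x r. 0 < r \<and> r \<le> diameter (UNIV::'a set) \<longrightarrow> c1 * r powr d \<le> measure \<sigma> (ball x r)"
    and r: "0 < r" and F: "finite F" "separated r F"
  shows "real (card F) \<le> 1 + measure \<sigma> UNIV / (c1 * (r/2) powr d)"
proof (cases "r/2 \<le> diameter (UNIV::'a set)")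
  case True
  interpret finite_measure \<sigma> by fact
  have disjoint: "disjoint_family_on (\<lambda>x. ball x (r/2)) F"
    unfolding disjoint_family_on_def
  proof (intro ballI impI equals0I)
    fix x y z assume "x \<in> F" "y \<in> F" "x \<noteq> y" "z \<in> ball x (r/2) \<inter> ball y (r/2)"
    then have "dist x y < r"
      using dist_triangle_half_l[of x z r y] by (simp add: dist_commute)
    then show False
      using F(2) \<open>x \<in> F\<close> \<open>y \<in> F\<close> \<open>x \<noteq> y\<close> unfolding separated_def by (meson not_le)
  qed
  have "measure \<sigma> (\<Union>x\<in>F. ball x (r/2)) = (\<Sum>x\<in>F. measure \<sigma> (ball x (r/2)))"
    by (rule finite_measure_finite_Union[OF F(1) _ disjoint]) (auto simp: sets)
  moreover have "(\<Sum>x\<in>F. c1 * (r/2) powr d) \<le> (\<Sum>x\<in>F. measure \<sigma> (ball x (r/2)))"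
    using lower True r by (intro sum_mono) auto
  moreover have "measure \<sigma> (\<Union>x\<in>F. ball x (r/2)) \<le> measure \<sigma> UNIV"
    using sets_eq_imp_space_eq[OF sets] by (intro finite_measure_mono) (auto simp: sets)
  ultimately have "real (card F) * (c1 * (r/2) powr d) \<le> measure \<sigma> UNIV"
    by simp
  then have "real (card F) \<le> measure \<sigma> UNIV / (c1 * (r/2) powr d)"
    using c1 r by (simp add: pos_le_divide_eq)
  then show ?thesis
    by simp
next
  case False
  have "dist x y < r" for x y :: 'a
    using diameter_bounded_bound[OF \<open>bounded UNIV\<close>, of x y] False r by simp
  then have "\<forall>x\<in>F. \<forall>y\<in>F. x = y"
    using F(2) unfolding separated_def by (meson not_le)
  then have "card F \<le> 1"
    using card_le_Suc0_iff_eq[OF F(1)] by simp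
  moreover have "0 \<le> measure \<sigma> UNIV / (c1 * (r/2) powr d)"
    using c1 by simp
  ultimately show ?thesis
    by linarith
qed

text \<open>A maximal \<open>r\<close>-separated set is an \<open>r\<close>-net.\<close>

lemma finite_net_exists:
  fixes \<sigma> :: "'a::metric_space measure"
  assumes "sets \<sigma> = sets borel" "finite_measure \<sigma>" "bounded (UNIV :: 'a set)" "0 < c1"
    and "\<forall>x r. 0 < r \<and> r \<le> diameter (UNIV::'a set) \<longrightarrow> c1 * r powr d \<le> measure \<sigma> (ball x r)"
    and r: "0 < r"
  obtains E :: "'a set" where "finite E" "real (card E) \<le> 1 + measure \<sigma> UNIV / (c1 * (r/2) powr d)"
    "\<And>x. \<exists>e\<in>E. dist x e < r"
proof -
  define B where "B = 1 + measure \<sigma> UNIV / (c1 * (r/2) powr d)"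
  have card_le: "real (card F) \<le> B" if "finite F" "separated r F" for F :: "'a set"
    unfolding B_def using card_separated_le[OF assms that] .
  have bounded_card: "card F < nat \<lceil>B\<rceil> + 1" if "finite F \<and> separated r F" for F :: "'a set"
  proof -
    have "real (card F) \<le> real (nat \<lceil>B\<rceil>)"
      using card_le[of F] that real_nat_ceiling_ge[of B] by linarith
    then show ?thesis
      by simp
  qed
  have "\<exists>E :: 'a set. (finite E \<and> separated r E) \<and> (\<forall>F :: 'a set. finite F \<and> separated r F \<longrightarrow> card F \<le> card E)"
  proof (rule Lattices_Big.ex_has_greatest_nat)
    show "finite {} \<and> separated r ({} :: 'a set)"
      by (simp add: separated_def)
    show "\<forall>F :: 'a set. finite F \<and> separated r F \<longrightarrow> card F < nat \<lceil>B\<rceil> + 1"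
      using bounded_card by blast
  qed
  then obtain E :: "'a set" where E: "finite E" "separated r E"
    and maximal: "\<And>F :: 'a set. finite F \<Longrightarrow> separated r F \<Longrightarrow> card F \<le> card E"
    by blast
  have net: "\<exists>e\<in>E. dist x e < r" for x
  proof (rule ccontr)
    assume "\<not> (\<exists>e\<in>E. dist x e < r)"
    then have "separated r (insert x E)" and "x \<notin> E"
      using E(2) r unfolding separated_def by (auto simp: dist_commute not_less)
    then show False
      using maximal[of "insert x E"] E(1) by simp
  qed
  show ?thesis
    using E(1) card_le[OF E, unfolded B_def] net by (rule that)
qed

lemma chain_connected_if_net:
  fixes S E :: "'a::metric_space set"
  assumes conn: "connected (UNIV :: 'a set)" and "E \<subseteq> S"
    and net: "\<And>x. \<exists>e\<in>E. dist x e < r"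
  shows "chain_connected S (2 * r)"
  unfolding chain_connected_def
proof (intro allI impI)
  fix T assume T: "T \<subseteq> S \<and> T \<noteq> {} \<and> T \<noteq> S"
  have "0 < r"
    using net by (meson le_less_trans zero_le_dist)
  show "\<exists>t\<in>T. \<exists>s\<in>S - T. dist t s < 2 * r"
  proof (rule ccontr)
    assume far: "\<not> (\<exists>t\<in>T. \<exists>s\<in>S - T. dist t s < 2 * r)"
    define U where "U = (\<Union>t\<in>T. ball t r)"
    define V where "V = (\<Union>s\<in>S - T. ball s r)"
    have "U \<inter> V = {}"
    proof (rule equals0I)
      fix z assume "z \<in> U \<inter> V"
      then obtain t s where "t \<in> T" "s \<in> S - T" "dist t z < r" "dist s z < r"
        unfolding U_def V_def by auto
      then show False
        using far dist_triangle_less_add[of t z r s r] by (auto simp: dist_commute)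
    qed
    moreover have "UNIV \<subseteq> U \<union> V"
    proof
      fix x
      obtain e where "e \<in> E" "dist x e < r" using net by blast
      then show "x \<in> U \<union> V"
        using \<open>E \<subseteq> S\<close> unfolding U_def V_def by (cases "e \<in> T") (auto simp: dist_commute)
    qed
    moreover have "U \<noteq> {}" "V \<noteq> {}"
      using T \<open>0 < r\<close> unfolding U_def V_def by auto
    ultimately show False
      using connectedD[OF conn, of U V] unfolding U_def V_def by blast
  qed
qed

lemma on_closed_curve_if_net:
  fixes E X :: "'a::metric_space set"
  assumes ls: "length_space TYPE('a)" and E: "finite E" "\<And>x. \<exists>e\<in>E. dist x e < r" and X: "finite X"
  shows "on_closed_curve X (4 * r * (card E + card X))"
proof -
  have "0 < r" "E \<noteq> {}"
    using E(2) by (meson le_less_trans zero_le_dist, blast)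
  define S where "S = E \<union> X"
  have S: "finite S" "S \<noteq> {}"
    using E X \<open>E \<noteq> {}\<close> by (auto simp: S_def)
  have "chain_connected S (2 * r)"
    using length_space_imp_path_connected[OF ls] E(2)
    by (intro chain_connected_if_net[of E]) (auto simp: S_def path_connected_imp_connected)
  then obtain xs where xs: "xs \<noteq> []" "hd xs = last xs" "set xs = S"
    and cost: "walk_cost xs \<le> 2 * (2 * r) * real (card S - 1)"
    using chain_connected_closed_walk[OF S] by blast
  obtain g where g: "path g" "pathstart g = hd xs" "pathfinish g = last xs" "set xs \<subseteq> path_image g"
    and length: "curve_length g 0 1 \<le> ereal (walk_cost xs + 4 * r)"
    using path_along_walk[OF ls xs(1), of "4 * r"] \<open>0 < r\<close> by auto
  have "real (card S - 1) = real (card S) - 1"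
    using S by (simp add: Suc_leI card_gt_0_iff of_nat_diff)
  then have "walk_cost xs + 4 * r \<le> 4 * r * card S"
    using cost by (simp add: algebra_simps)
  also have "\<dots> \<le> 4 * r * (card E + card X)"
    using card_Un_le[of E X] \<open>0 < r\<close> by (simp add: S_def)
  finally have "curve_length g 0 1 \<le> ereal (4 * r * (card E + card X))"
    using length by (meson ereal_less_eq(3) order_trans)
  moreover have "X \<subseteq> path_image g"
    using g(4) xs(3) by (auto simp: S_def)
  ultimately show ?thesis
    unfolding on_closed_curve_def using g xs(2) by auto
qed

lemma on_closed_curve_mono: "on_closed_curve X L \<Longrightarrow> L \<le> L' \<Longrightarrow> on_closed_curve X L'"
  unfolding on_closed_curve_def by (meson ereal_less_eq(3) order_trans)

lemma on_closed_curve_empty: "on_closed_curve ({} :: 'a::metric_space set) 0"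
  unfolding on_closed_curve_def
  using curve_length_const[of "undefined :: 'a" 0 1]
  by (intro exI[of _ "\<lambda>_. undefined"]) (simp add: path_def pathstart_def pathfinish_def zero_ereal_def)

lemma closed_curve_length_bound:
  fixes \<sigma> :: "'a::metric_space measure"
  assumes "sets \<sigma> = sets borel" "finite_measure \<sigma>" "bounded (UNIV :: 'a set)" and c1: "0 < c1"
    and "\<forall>x r. 0 < r \<and> r \<le> diameter (UNIV::'a set) \<longrightarrow> c1 * r powr d \<le> measure \<sigma> (ball x r)"
    and ls: "length_space TYPE('a)" and d: "0 < d"
  obtains C where "0 < C"
    "\<And>N (X :: 'a set). finite X \<Longrightarrow> card X \<le> N \<Longrightarrow> on_closed_curve X (C * real N powr (1 - 1/d))"
proof -
  define A where "A = measure \<sigma> UNIV * 2 powr d / c1"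
  have "0 \<le> A"
    using c1 by (simp add: A_def)
  have curve: "on_closed_curve X (4 * (A + 2) * real N powr (1 - 1/d))"
    if X: "finite X" "card X \<le> N" for N and X :: "'a set"
  proof (cases "N = 0")
    case True
    then show ?thesis
      using X on_closed_curve_empty by simp
  next
    case False
    define r where "r = real N powr (-1/d)"
    have "0 < r"
      using False by (simp add: r_def)
    have "r powr d = real N powr (-1/d * d)"
      unfolding r_def by (rule powr_powr)
    also have "\<dots> = 1 / real N"
      using d False by (simp add: powr_minus divide_inverse)
    finally have "r powr d = 1 / real N" .
    then have size: "measure \<sigma> UNIV / (c1 * (r/2) powr d) = A * real N"
      using c1 \<open>0 < r\<close> by (simp add: A_def powr_divide field_simps)
    obtain E :: "'a set" where E: "finite E" "real (card E) \<le> 1 + measure \<sigma> UNIV / (c1 * (r/2) powr d)"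
      and net: "\<And>x. \<exists>e\<in>E. dist x e < r"
      using finite_net_exists[OF assms(1-5) \<open>0 < r\<close>] by blast
    have count: "real (card E) + real (card X) \<le> A * real N + 2 * real N"
      using E(2) size X(2) False by (simp add: Suc_le_eq of_nat_mono)
    have "4 * r * (card E + card X) \<le> 4 * (A + 2) * (r * real N)"
      using mult_left_mono[OF count, of "4 * r"] \<open>0 < r\<close> by (simp add: algebra_simps)
    also have "r * real N = real N powr (1 - 1/d)"
      using powr_add[of "real N" 1 "-1/d"] False by (simp add: r_def)
    finally have "4 * r * (card E + card X) \<le> 4 * (A + 2) * real N powr (1 - 1/d)" .
    then show ?thesis
      using on_closed_curve_if_net[OF ls E(1) net X(1)] by (rule on_closed_curve_mono[rotated])
  qed
  have "0 < 4 * (A + 2)"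
    using \<open>0 \<le> A\<close> by simp
  then show ?thesis
    using curve by (rule that)
qed

theorem proposition1:
  fixes \<sigma> :: "'a::metric_space measure" and d :: real
  assumes "compact (UNIV :: 'a set)"
    and "sets \<sigma> = sets borel"
    and "finite_measure \<sigma>"
    and "measure_support \<sigma> = UNIV"
    and "0 < d"
    and "ahlfors_regular \<sigma> d"
    and "length_space TYPE('a)"
  shows "\<exists>C. 0 < C \<and> (\<forall>N::nat. TSP TYPE('a) N \<le> C * real N powr (1 - 1/d)) \<and>
             (\<forall>N::nat. (P_atom N :: 'a measure set) \<subseteq> P_curve (C * real N powr (1 - 1/d)))"
proof -
  obtain c1 where c1: "0 < c1"
    and lower: "\<forall>x r. 0 < r \<and> r \<le> diameter (UNIV::'a set) \<longrightarrow> c1 * r powr d \<le> measure \<sigma> (ball x r)"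
    using assms(6) unfolding ahlfors_regular_def by blast
  obtain C where "0 < C"
    and C: "\<And>N (X :: 'a set). finite X \<Longrightarrow> card X \<le> N \<Longrightarrow> on_closed_curve X (C * real N powr (1 - 1/d))"
    using closed_curve_length_bound[OF assms(2,3) compact_imp_bounded[OF assms(1)] c1 lower assms(7,5)] by blast
  have "TSP TYPE('a) N \<le> C * real N powr (1 - 1/d)" for N
    by (rule TSP_le_if_on_closed_curve, rule C) (auto simp: card_length)
  moreover have "(P_atom N :: 'a measure set) \<subseteq> P_curve (C * real N powr (1 - 1/d))" for N
    by (rule P_atom_subset_P_curve, rule C) (auto intro: card_image_le[THEN order_trans])
  ultimately show ?thesis
    using \<open>0 < C\<close> by blast
qed

end
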